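(* Let $S_m$ be the random walk below and $I$ the function below. Then for every integer $m>0$ and $x\in[0,1)$, $$\mathbb P\Big(\sup_{0\le k\le m}S_k\ge xm\Big)\le e^{-mI(x)},$$ in particular $\mathbb P(S_m\ge xm)\le e^{-mI(x)}$. Furthermore there is $\varepsilon>0$ with $I(x)\ge\varepsilon x^2$ for all $x\in[0,1)$, and consequently $\mathbb P(\sup_{0\le k\le m}S_k\ge xm)\le e^{-\varepsilon mx^2}$ and $\mathbb P(S_m\ge xm)\le e^{-\varepsilon mx^2}$ for all $x\ge0$.
   Context: $S_m=X^{(1)}+\dots+X^{(m)}$, $S_0=0$, with i.i.d. steps distributed as $X=X_1+X_2$, where $X_1,X_2$ are independent, $\mathbb P(X_1=0)=(\sqrt2-1)/\sqrt2$, $\mathbb P(X_1=1)=1/\sqrt2$, $\mathbb P(X_2=-k)=\sqrt2(\sqrt2-1)^{k+1}$ for $k=0,1,2,\dots$. For $x<1$, $$I(x)=(2-x)\log(\sqrt2+1)+(1-x)\log\Big(\frac{1-x}{1+\sqrt{1+(1-x)^2}}\Big)+\log\Big(\frac{x+\sqrt{1+(1-x)^2}}{2-x+\sqrt{1+(1-x)^2}}\Big).$$ *)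

theory Defs
  imports "HOL-Probability.Probability"
begin

definition X1_pmf :: "int pmf" where
  "X1_pmf = map_pmf (\<lambda>b. if b then 1 else 0) (bernoulli_pmf (1 / sqrt 2))"

text \<open>X2: P(X2 = -k) = sqrt 2 (sqrt 2 - 1)^(k+1) = (1 - q)^k q with q = 2 - sqrt 2,
  i.e. X2 is minus a geometric variable with success parameter 2 - sqrt 2.\<close>
definition X2_pmf :: "int pmf" where
  "X2_pmf = map_pmf (\<lambda>k. - int k) (geometric_pmf (2 - sqrt 2))"

definition step_pmf :: "int pmf" where
  "step_pmf = map_pmf (\<lambda>(a, b). a + b) (pair_pmf X1_pmf X2_pmf)"

definition steps_pmf :: "nat \<Rightarrow> int list pmf" where
  "steps_pmf m = replicate_pmf m step_pmf"

definition S :: "int list \<Rightarrow> nat \<Rightarrow> int" where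
  "S xs k = sum_list (take k xs)"

definition rate_I :: "real \<Rightarrow> real" where
  "rate_I x = (2 - x) * ln (sqrt 2 + 1)
     + (1 - x) * ln ((1 - x) / (1 + sqrt (1 + (1 - x)^2)))
     + ln ((x + sqrt (1 + (1 - x)^2)) / (2 - x + sqrt (1 + (1 - x)^2)))"

end

theory Submission
  imports Defs
begin

(* Splitting off the first step X, the running maximum of the partial sums satisfies
   M_(m+1) = max 0 (X + M'), where M' is the running maximum of the walk formed by the remaining
   m steps and is independent of X. Hence, for u >= 1, induction on m gives the maximal inequality
   P(M_m >= c) <= phi(u)^m u^(-c), where phi(u) = E u^X = alpha u (u + alpha) / (u - alpha) with
   alpha = sqrt 2 - 1. At the maximiser u of x ln u - ln phi(u) the exponent equals I(x), so the
   bound becomes exp(-m I(x)); evaluating the exponent at u = 1 + x/2 instead gives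
   I(x) >= x^2/16. For x > 1 the probabilities vanish, as no step exceeds 1. *)

definition \<alpha> :: real where "\<alpha> = sqrt 2 - 1"

lemma sqrt_2_bounds: "1.4 < sqrt (2::real)" "sqrt (2::real) < 1.42"
  by (rule real_less_rsqrt real_less_lsqrt; simp add: power2_eq_square)+

lemma \<alpha>_pos: "0 < \<alpha>" and \<alpha>_le: "\<alpha> \<le> 3 / 7" and \<alpha>_square: "\<alpha>\<^sup>2 = 1 - 2 * \<alpha>"
  and one_minus_\<alpha>: "1 - \<alpha> = 2 - sqrt 2" and \<alpha>_mult_sqrt_2_plus_1: "\<alpha> * (sqrt 2 + 1) = 1"
  and sqrt_2_mult_\<alpha>: "sqrt 2 * \<alpha> = 1 - \<alpha>"
  unfolding \<alpha>_def using sqrt_2_bounds by (auto simp: power2_eq_square algebra_simps)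

lemma \<alpha>_less_1: "\<alpha> < 1"
  using \<alpha>_le by simp

lemma ln_\<alpha>: "ln \<alpha> = - ln (sqrt 2 + 1)"
proof -
  have "ln \<alpha> + ln (sqrt 2 + 1) = ln (\<alpha> * (sqrt 2 + 1))"
    using \<alpha>_pos by (intro ln_mult_pos[symmetric]) (auto intro: add_pos_pos)
  then show ?thesis
    using \<alpha>_mult_sqrt_2_plus_1 by simp
qed

lemma nn_integral_geometric_pmf_powr:
  assumes p: "0 < p" "p \<le> 1" and u: "1 - p < u"
  shows "(\<integral>\<^sup>+k. ennreal (u powr - real k) \<partial>geometric_pmf p) = ennreal (p * u / (u - (1 - p)))"
proof -
  have u_pos: "0 < u" using p u by linarith
  have "(\<lambda>k. p * ((1 - p) / u) ^ k) sums (p * (1 / (1 - (1 - p) / u)))"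
    using p u by (intro sums_mult geometric_sums) auto
  then have "(\<Sum>k. ennreal (p * ((1 - p) / u) ^ k)) = ennreal (p * u / (u - (1 - p)))"
    using p u_pos u by (subst suminf_ennreal_eq) (auto simp: field_simps)
  moreover have "pmf (geometric_pmf p) k * u powr - real k = p * ((1 - p) / u) ^ k" for k
    using p u_pos by (simp add: powr_minus powr_realpow power_divide field_simps)
  ultimately show ?thesis
    by (simp only: nn_integral_measure_pmf nn_integral_count_space_nat
        ennreal_mult'[OF pmf_nonneg, symmetric])
qed

lemma nn_integral_X1_pmf_powr:
  assumes "0 < u"
  shows "(\<integral>\<^sup>+a. ennreal (u powr real_of_int a) \<partial>X1_pmf) = ennreal ((u + \<alpha>) / sqrt 2)"
proof -
  have "0 \<le> 1 / sqrt (2::real)" "1 / sqrt (2::real) \<le> 1" using sqrt_2_bounds by auto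
  moreover have "u * (1 / sqrt 2) + (1 - 1 / sqrt 2) = (u + \<alpha>) / sqrt 2"
    by (simp add: \<alpha>_def field_simps)
  ultimately show ?thesis
    using assms by (simp add: X1_pmf_def ennreal_mult'[symmetric] ennreal_plus[symmetric])
qed

lemma nn_integral_X2_pmf_powr:
  assumes "\<alpha> < u"
  shows "(\<integral>\<^sup>+b. ennreal (u powr real_of_int b) \<partial>X2_pmf) = ennreal ((1 - \<alpha>) * u / (u - \<alpha>))"
  using nn_integral_geometric_pmf_powr[of "1 - \<alpha>" u] assms \<alpha>_pos \<alpha>_less_1
  by (simp add: X2_pmf_def one_minus_\<alpha>[symmetric])

definition step_mgf :: "real \<Rightarrow> real" where
  "step_mgf u = \<alpha> * u * (u + \<alpha>) / (u - \<alpha>)"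

lemma nn_integral_step_pmf_powr:
  assumes "\<alpha> < u"
  shows "(\<integral>\<^sup>+x. ennreal (u powr real_of_int x) \<partial>step_pmf) = ennreal (step_mgf u)"
proof -
  have u: "0 < u" using assms \<alpha>_pos by linarith
  have "(\<integral>\<^sup>+x. ennreal (u powr real_of_int x) \<partial>step_pmf)
      = (\<integral>\<^sup>+a. \<integral>\<^sup>+b. ennreal (u powr real_of_int a) * ennreal (u powr real_of_int b) \<partial>X2_pmf \<partial>X1_pmf)"
    by (simp add: step_pmf_def nn_integral_pair_pmf' powr_add ennreal_mult)
  also have "\<dots> = ennreal ((u + \<alpha>) / sqrt 2) * ennreal ((1 - \<alpha>) * u / (u - \<alpha>))"
    using u assms
    by (simp add: nn_integral_cmult nn_integral_multc nn_integral_X1_pmf_powr nn_integral_X2_pmf_powr)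
  also have "\<dots> = ennreal ((u + \<alpha>) / sqrt 2 * ((1 - \<alpha>) * u / (u - \<alpha>)))"
    using u assms \<alpha>_pos \<alpha>_less_1 by (intro ennreal_mult[symmetric]) auto
  also have "(u + \<alpha>) / sqrt 2 * ((1 - \<alpha>) * u / (u - \<alpha>)) = step_mgf u"
    unfolding step_mgf_def sqrt_2_mult_\<alpha>[symmetric] by simp
  finally show ?thesis .
qed

lemma step_mgf_minus_1:
  assumes "u \<noteq> \<alpha>"
  shows "step_mgf u - 1 = \<alpha> * (u - 1)\<^sup>2 / (u - \<alpha>)"
proof -
  have "\<alpha> * u * (u + \<alpha>) - (u - \<alpha>) - \<alpha> * (u - 1)\<^sup>2 = u * (\<alpha>\<^sup>2 + 2 * \<alpha> - 1)"
    by (simp add: power2_eq_square algebra_simps)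
  then have "\<alpha> * u * (u + \<alpha>) - (u - \<alpha>) = \<alpha> * (u - 1)\<^sup>2"
    using \<alpha>_square by simp
  then show ?thesis
    using assms by (simp add: step_mgf_def field_simps)
qed

lemma step_mgf_ge_1:
  assumes "\<alpha> < u"
  shows "1 \<le> step_mgf u"
proof -
  have "0 \<le> \<alpha> * (u - 1)\<^sup>2 / (u - \<alpha>)"
    using assms \<alpha>_pos by simp
  then show ?thesis
    using step_mgf_minus_1[of u] assms by simp
qed

lemma ln_step_mgf:
  assumes "\<alpha> < w"
  shows "ln (step_mgf w) = ln \<alpha> + ln w + ln (w + \<alpha>) - ln (w - \<alpha>)"
  using assms \<alpha>_pos by (simp add: step_mgf_def ln_mult ln_div)

fun max_partial_sum :: "int list \<Rightarrow> int" where
  "max_partial_sum [] = 0"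
| "max_partial_sum (x # xs) = max 0 (x + max_partial_sum xs)"

lemma Max_S_eq_max_partial_sum: "(MAX k\<in>{0..length xs}. S xs k) = max_partial_sum xs"
proof (induction xs)
  case Nil
  then show ?case by (simp add: S_def)
next
  case (Cons x xs)
  have "{0..length (x # xs)} = insert 0 (Suc ` {0..length xs})"
    by (auto simp: image_iff)
  moreover have "S (x # xs) 0 = 0" "S (x # xs) (Suc k) = S xs k + x" for k
    by (simp_all add: S_def)
  ultimately have "(MAX k\<in>{0..length (x # xs)}. S (x # xs) k) = max 0 (MAX k\<in>{0..length xs}. S xs k + x)"
    by (simp add: image_image del: image_Suc_atLeastAtMost)
  also have "\<dots> = max 0 ((MAX k\<in>{0..length xs}. S xs k) + x)"
    by (subst Max_add_commute) auto
  finally show ?case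
    using Cons by (simp add: add.commute)
qed

lemma max_partial_sum_le_length: "\<forall>z\<in>set xs. z \<le> 1 \<Longrightarrow> max_partial_sum xs \<le> int (length xs)"
  by (induction xs) auto

(* The hypothesis 1 \<le> M covers the thresholds c \<le> 0, for which the event is certain. *)
lemma emeasure_max_partial_sum_ge:
  fixes p :: "int pmf"
  assumes u: "1 \<le> u" and M: "1 \<le> M"
    and mgf: "(\<integral>\<^sup>+x. ennreal (u powr real_of_int x) \<partial>p) \<le> ennreal M"
  shows "emeasure (replicate_pmf m p) {xs. c \<le> real_of_int (max_partial_sum xs)}
           \<le> ennreal (M ^ m * u powr - c)"
proof -
  have nonpos_threshold: "emeasure (measure_pmf q) A \<le> ennreal (M ^ n * u powr - c)" if "c \<le> 0" for q A n c
  proof -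
    have "1 * 1 \<le> M ^ n * u powr - c"
      using u M that by (intro mult_mono one_le_power ge_one_powr_ge_zero) auto
    then show ?thesis
      by (intro order_trans[OF measure_pmf.emeasure_le_1]) (simp add: ennreal_leI)
  qed
  show ?thesis
  proof (induction m arbitrary: c)
    case 0
    show ?case
    proof (cases "c \<le> 0")
      case True
      then show ?thesis by (rule nonpos_threshold)
    qed simp
  next
    case (Suc m)
    show ?case
    proof (cases "c \<le> 0")
      case True
      then show ?thesis by (rule nonpos_threshold)
    next
      case False
      let ?A = "\<lambda>c. {xs. c \<le> real_of_int (max_partial_sum xs)}"
      have "indicator (?A c) (x # xs) = (indicator (?A (c - real_of_int x)) xs :: ennreal)" for x xs
        using False by (auto simp: indicator_def)
      then have "emeasure (replicate_pmf (Suc m) p) (?A c)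
          = (\<integral>\<^sup>+x. emeasure (replicate_pmf m p) (?A (c - real_of_int x)) \<partial>p)"
        by (simp flip: nn_integral_indicator)
      also have "\<dots> \<le> (\<integral>\<^sup>+x. ennreal (M ^ m * u powr - c) * ennreal (u powr real_of_int x) \<partial>p)"
      proof (rule nn_integral_mono)
        fix x :: int
        have "M ^ m * u powr - (c - real_of_int x) = M ^ m * u powr - c * u powr real_of_int x"
          by (simp add: powr_add[symmetric])
        then show "emeasure (replicate_pmf m p) (?A (c - real_of_int x))
            \<le> ennreal (M ^ m * u powr - c) * ennreal (u powr real_of_int x)"
          using Suc.IH[of "c - real_of_int x"] M by (simp add: ennreal_mult'[symmetric] mult.assoc)
      qed
      also have "\<dots> \<le> ennreal (M ^ m * u powr - c) * ennreal M"
        using mgf by (simp add: nn_integral_cmult mult_left_mono)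
      also have "\<dots> = ennreal (M ^ Suc m * u powr - c)"
        using M by (simp add: ennreal_mult'[symmetric] mult_ac)
      finally show ?thesis .
    qed
  qed
qed

lemma set_pmf_steps_pmf:
  assumes "xs \<in> set_pmf (steps_pmf m)"
  shows "length xs = m" "\<forall>z\<in>set xs. z \<le> 1"
  using assms
  by (auto simp: steps_pmf_def set_replicate_pmf in_lists_conv_set step_pmf_def X1_pmf_def
      X2_pmf_def set_pair_pmf)

lemma prob_Max_S_ge_le_step_mgf:
  assumes u: "1 \<le> u"
  shows "measure_pmf.prob (steps_pmf m) {xs. c \<le> real_of_int (MAX k\<in>{0..m}. S xs k)}
           \<le> step_mgf u ^ m * u powr - c"
proof -
  have mgf: "1 \<le> step_mgf u" "(\<integral>\<^sup>+x. ennreal (u powr real_of_int x) \<partial>step_pmf) = ennreal (step_mgf u)"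
    using u \<alpha>_less_1 by (simp_all add: step_mgf_ge_1 nn_integral_step_pmf_powr)
  have "(MAX k\<in>{0..m}. S xs k) = max_partial_sum xs" if "xs \<in> set_pmf (steps_pmf m)" for xs
    using Max_S_eq_max_partial_sum[of xs] set_pmf_steps_pmf(1)[OF that] by simp
  then have "measure_pmf.prob (steps_pmf m) {xs. c \<le> real_of_int (MAX k\<in>{0..m}. S xs k)}
      = measure_pmf.prob (steps_pmf m) {xs. c \<le> real_of_int (max_partial_sum xs)}"
    by (intro measure_pmf.finite_measure_eq_AE) (auto simp: AE_measure_pmf_iff)
  also have "\<dots> \<le> step_mgf u ^ m * u powr - c"
    using emeasure_max_partial_sum_ge[OF u mgf(1), of step_pmf m c] mgf
    by (simp add: steps_pmf_def measure_pmf.emeasure_eq_measure)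
  finally show ?thesis .
qed

definition chernoff_exponent :: "real \<Rightarrow> real \<Rightarrow> real" where
  "chernoff_exponent x u = x * ln u - ln (step_mgf u)"

lemma prob_Max_S_ge_le_exp:
  assumes u: "1 \<le> u"
  shows "measure_pmf.prob (steps_pmf m) {xs. real_of_int (MAX k\<in>{0..m}. S xs k) \<ge> x * real m}
           \<le> exp (- real m * chernoff_exponent x u)"
proof -
  have "0 < step_mgf u"
    using u \<alpha>_less_1 step_mgf_ge_1[of u] by simp
  then have "step_mgf u ^ m * u powr - (x * real m)
      = exp (ln (step_mgf u)) ^ m * exp (- (x * real m) * ln u)"
    using u by (simp add: powr_def)
  also have "\<dots> = exp (- real m * chernoff_exponent x u)"
    by (simp add: chernoff_exponent_def exp_of_nat_mult[symmetric] exp_add[symmetric] algebra_simps)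
  finally show ?thesis
    using prob_Max_S_ge_le_step_mgf[OF u, of m "x * real m"] by simp
qed

lemma prob_S_ge_le_prob_Max_S_ge:
  "measure_pmf.prob (steps_pmf m) {xs. c \<le> real_of_int (S xs m)}
     \<le> measure_pmf.prob (steps_pmf m) {xs. c \<le> real_of_int (MAX k\<in>{0..m}. S xs k)}"
proof (rule measure_pmf.finite_measure_mono)
  have "S xs m \<le> (MAX k\<in>{0..m}. S xs k)" for xs
    by (rule Max_ge) auto
  then show "{xs. c \<le> real_of_int (S xs m)} \<subseteq> {xs. c \<le> real_of_int (MAX k\<in>{0..m}. S xs k)}"
    by (auto elim!: order_trans)
qed simp

lemma prob_Max_S_ge_eq_0:
  assumes "real m < c"
  shows "measure_pmf.prob (steps_pmf m) {xs. c \<le> real_of_int (MAX k\<in>{0..m}. S xs k)} = 0"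
proof -
  have "(MAX k\<in>{0..m}. S xs k) \<le> int m" if "xs \<in> set_pmf (steps_pmf m)" for xs
    using set_pmf_steps_pmf[OF that] Max_S_eq_max_partial_sum[of xs] max_partial_sum_le_length[of xs]
    by simp
  then show ?thesis
    using assms unfolding measure_pmf_zero_iff by fastforce
qed

(* The larger root of (1 - x) u\<^sup>2 - 2 \<alpha> u - (1 - x) \<alpha>\<^sup>2, the numerator of the derivative of
   chernoff_exponent x at u up to a negative factor. *)
definition optimal_base :: "real \<Rightarrow> real" where
  "optimal_base x = \<alpha> * (1 + sqrt (1 + (1 - x)\<^sup>2)) / (1 - x)"

lemma optimal_base_ge_1:
  assumes "0 \<le> x" "x < 1"
  shows "1 \<le> optimal_base x"
proof -
  define y r where "y = 1 - x" and "r = sqrt (1 + y\<^sup>2)"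
  have y: "0 < y" "y \<le> 1" and r: "0 \<le> r"
    using assms by (auto simp: y_def r_def)
  have "y * (sqrt 2 + 1) - 1 \<le> r"
  proof (cases "y * (sqrt 2 + 1) - 1 \<le> 0")
    case False
    have "(y * (sqrt 2 + 1) - 1)\<^sup>2 = 1 + y\<^sup>2 + 2 * (1 + sqrt 2) * y * (y - 1)"
      by (simp add: power2_eq_square algebra_simps)
    also have "\<dots> \<le> 1 + y\<^sup>2"
      using y by (simp add: mult_nonneg_nonpos)
    finally show ?thesis
      unfolding r_def by (rule real_le_rsqrt)
  qed (use r in linarith)
  then have "\<alpha> * (y * (sqrt 2 + 1)) \<le> \<alpha> * (1 + r)"
    using \<alpha>_pos by (intro mult_left_mono) auto
  moreover have "\<alpha> * (y * (sqrt 2 + 1)) = y"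
    using \<alpha>_mult_sqrt_2_plus_1 by (metis mult.left_commute mult_1_right)
  ultimately have "y \<le> \<alpha> * (1 + r)"
    by simp
  then show ?thesis
    using y by (simp add: optimal_base_def y_def r_def)
qed

lemma rate_I_eq_chernoff_exponent:
  assumes x: "0 \<le> x" "x < 1"
  shows "rate_I x = chernoff_exponent x (optimal_base x)"
proof -
  define y r U where "y = 1 - x" and "r = sqrt (1 + y\<^sup>2)" and "U = optimal_base x"
  have y: "0 < y" and r: "1 \<le> r"
    using x by (auto simp: y_def r_def)
  have U: "U = \<alpha> * ((1 + r) / y)"
    by (simp add: U_def optimal_base_def y_def r_def)
  have "\<alpha> < U"
    using optimal_base_ge_1[OF x] \<alpha>_less_1 by (simp add: U_def)
  have ln_U: "ln U = - ln (sqrt 2 + 1) - ln (y / (1 + r))"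
    using y r \<alpha>_pos by (simp add: U ln_mult ln_div ln_\<alpha>)
  define c where "c = \<alpha> / y"
  have "0 < c" "U + \<alpha> = c * (2 - x + r)" "U - \<alpha> = c * (x + r)"
    using y \<alpha>_pos by (simp_all add: c_def U y_def field_simps)
  then have ln_ratio: "ln (U + \<alpha>) - ln (U - \<alpha>) = ln (2 - x + r) - ln (x + r)"
    using y r x \<alpha>_pos by (simp add: ln_mult)
  have "chernoff_exponent x U = - y * ln U - ln \<alpha> - (ln (U + \<alpha>) - ln (U - \<alpha>))"
    using \<open>\<alpha> < U\<close> by (simp add: chernoff_exponent_def ln_step_mgf y_def algebra_simps)
  also have "\<dots> = (2 - x) * ln (sqrt 2 + 1) + y * ln (y / (1 + r)) + ln ((x + r) / (2 - x + r))"
    using r x unfolding ln_U ln_ratio ln_\<alpha> by (simp add: ln_div y_def algebra_simps)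
  also have "\<dots> = rate_I x"
    by (simp add: rate_I_def y_def r_def)
  finally show ?thesis
    by (simp add: U_def)
qed

lemma chernoff_exponent_le_optimal_base:
  assumes x: "0 \<le> x" "x < 1" and v: "\<alpha> < v"
  shows "chernoff_exponent x v \<le> chernoff_exponent x (optimal_base x)"
proof -
  define y r U where "y = 1 - x" and "r = sqrt (1 + y\<^sup>2)" and "U = optimal_base x"
  have y: "0 < y" and r: "1 \<le> r" "r\<^sup>2 = 1 + y\<^sup>2"
    using x by (auto simp: y_def r_def)
  have U: "\<alpha> < U" "U = \<alpha> * (1 + r) / y"
    using optimal_base_ge_1[OF x] \<alpha>_less_1 by (auto simp: U_def optimal_base_def y_def r_def)
  define h where "h w = x * ln w - (ln \<alpha> + ln w + ln (w + \<alpha>) - ln (w - \<alpha>))" for w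
  define h' where "h' w = (U - w) * (y * w + \<alpha> * (r - 1)) / (w * (w + \<alpha>) * (w - \<alpha>))" for w
  have h_eq: "h w = chernoff_exponent x w" if "\<alpha> < w" for w
    using that by (simp add: h_def chernoff_exponent_def ln_step_mgf)
  have h_deriv: "(h has_real_derivative h' w) (at w)" if "\<alpha> < w" for w
  proof -
    have w: "0 < w" "0 < w + \<alpha>" "0 < w - \<alpha>"
      using that \<alpha>_pos by auto
    have "y * (y * w\<^sup>2 - 2 * \<alpha> * w - y * \<alpha>\<^sup>2) = (y * w - \<alpha>)\<^sup>2 - \<alpha>\<^sup>2 * (1 + y\<^sup>2)"
      by (simp add: power2_eq_square algebra_simps)
    also have "\<dots> = y * ((w - U) * (y * w + \<alpha> * (r - 1)))"
      using y unfolding r(2)[symmetric] U(2) by (simp add: power2_eq_square field_simps)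
    finally have numerator: "y * w\<^sup>2 - 2 * \<alpha> * w - y * \<alpha>\<^sup>2 = (w - U) * (y * w + \<alpha> * (r - 1))"
      using y by simp
    have "(x - 1) / w - 1 / (w + \<alpha>) + 1 / (w - \<alpha>)
        = - (y * w\<^sup>2 - 2 * \<alpha> * w - y * \<alpha>\<^sup>2) / (w * (w + \<alpha>) * (w - \<alpha>))"
      using w by (simp add: y_def divide_simps power2_eq_square; simp add: algebra_simps)
    also have "\<dots> = h' w"
      unfolding numerator h'_def by (metis minus_diff_eq mult_minus_left)
    finally have "(x - 1) / w - 1 / (w + \<alpha>) + 1 / (w - \<alpha>) = h' w" .
    moreover have "(h has_real_derivative (x - 1) / w - 1 / (w + \<alpha>) + 1 / (w - \<alpha>)) (at w)"
      unfolding h_def using w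
      by (auto intro!: derivative_eq_intros simp: diff_divide_distrib add_divide_distrib)
    ultimately show ?thesis
      by simp
  qed
  have h'_factors_pos: "0 < y * w + \<alpha> * (r - 1)" "0 < w * (w + \<alpha>) * (w - \<alpha>)" if "\<alpha> < w" for w
    using that y r \<alpha>_pos by (auto intro!: add_pos_nonneg mult_pos_pos)
  have "h v \<le> h U"
  proof (cases "v \<le> U")
    case True
    show ?thesis
    proof (rule DERIV_nonneg_imp_nondecreasing[OF True])
      fix w assume w: "v \<le> w" "w \<le> U"
      then have "\<alpha> < w" using v by linarith
      moreover have "0 \<le> h' w"
        unfolding h'_def using h'_factors_pos[OF \<open>\<alpha> < w\<close>] w
        by (intro divide_nonneg_pos mult_nonneg_nonneg) auto
      ultimately show "\<exists>d. DERIV h w :> d \<and> 0 \<le> d"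
        using h_deriv by blast
    qed
  next
    case False
    show ?thesis
    proof (rule DERIV_nonpos_imp_nonincreasing[of U v])
      fix w assume w: "U \<le> w" "w \<le> v"
      then have "\<alpha> < w" using U(1) by linarith
      moreover have "h' w \<le> 0"
        unfolding h'_def using h'_factors_pos[OF \<open>\<alpha> < w\<close>] w
        by (intro divide_nonpos_pos mult_nonpos_nonneg) auto
      ultimately show "\<exists>d. DERIV h w :> d \<and> d \<le> 0"
        using h_deriv by blast
    qed (use False in simp)
  qed
  then show ?thesis
    using h_eq U(1) v by (simp add: U_def)
qed

lemma chernoff_exponent_lower_bound:
  assumes x: "0 \<le> x" "x \<le> 1"
  shows "x\<^sup>2 / 16 \<le> chernoff_exponent x (1 + x / 2)"
proof -
  define v where "v = 1 + x / 2"
  have v: "\<alpha> < v"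
    using x \<alpha>_less_1 by (simp add: v_def)
  have "x / 2 - (x / 2)\<^sup>2 \<le> ln v"
    unfolding v_def by (rule ln_one_plus_pos_lower_bound) (use x in auto)
  then have "x * (x / 2 - (x / 2)\<^sup>2) \<le> x * ln v"
    using x by (intro mult_left_mono) auto
  moreover have "x\<^sup>2 / 4 \<le> x * (x / 2 - (x / 2)\<^sup>2)"
    using x by (simp add: power2_eq_square mult_left_le_one_le field_simps)
  ultimately have ln_v: "x\<^sup>2 / 4 \<le> x * ln v"
    by linarith
  have "ln (step_mgf v) \<le> step_mgf v - 1"
    using step_mgf_ge_1[OF v] by (intro ln_le_minus_one) simp
  also have "\<dots> = \<alpha> * (x / 2)\<^sup>2 / (v - \<alpha>)"
    using step_mgf_minus_1[of v] v by (simp add: v_def)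
  also have "\<dots> \<le> \<alpha> * (x / 2)\<^sup>2 / (1 - \<alpha>)"
    using x \<alpha>_pos \<alpha>_less_1 by (intro divide_left_mono) (auto simp: v_def)
  also have "\<dots> \<le> 3 * x\<^sup>2 / 16"
  proof -
    have "\<alpha> / (1 - \<alpha>) \<le> 3 / 4"
      using \<alpha>_le \<alpha>_less_1 by (simp add: field_simps)
    then have "\<alpha> / (1 - \<alpha>) * (x\<^sup>2 / 4) \<le> 3 / 4 * (x\<^sup>2 / 4)"
      by (intro mult_right_mono) auto
    then show ?thesis
      by (simp add: power2_eq_square field_simps)
  qed
  finally show ?thesis
    using ln_v by (simp add: chernoff_exponent_def v_def)
qed

lemma rate_I_lower_bound:
  assumes "0 \<le> x" "x < 1"
  shows "1 / 16 * x\<^sup>2 \<le> rate_I x"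
  using chernoff_exponent_lower_bound[of x] chernoff_exponent_le_optimal_base[OF assms, of "1 + x / 2"]
    rate_I_eq_chernoff_exponent[OF assms] assms \<alpha>_less_1
  by simp

lemma prob_Max_S_ge_le_exp_square:
  assumes m: "0 < m" and x: "0 \<le> x"
  shows "measure_pmf.prob (steps_pmf m) {xs. real_of_int (MAX k\<in>{0..m}. S xs k) \<ge> x * real m}
           \<le> exp (- (1 / 16) * real m * x\<^sup>2)"
proof (cases "x \<le> 1")
  case True
  have "measure_pmf.prob (steps_pmf m) {xs. real_of_int (MAX k\<in>{0..m}. S xs k) \<ge> x * real m}
      \<le> exp (- real m * chernoff_exponent x (1 + x / 2))"
    using x by (intro prob_Max_S_ge_le_exp) simp
  also have "\<dots> \<le> exp (- (1 / 16) * real m * x\<^sup>2)"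
  proof -
    have "real m * (x\<^sup>2 / 16) \<le> real m * chernoff_exponent x (1 + x / 2)"
      using chernoff_exponent_lower_bound[OF x True] by (intro mult_left_mono) auto
    then show ?thesis
      by simp
  qed
  finally show ?thesis .
next
  case False
  then show ?thesis
    using prob_Max_S_ge_eq_0[of m "x * real m"] m by simp
qed

theorem proposition2p3:
  shows "(\<forall>m::nat. m > 0 \<longrightarrow> (\<forall>x::real. 0 \<le> x \<and> x < 1 \<longrightarrow>
            measure_pmf.prob (steps_pmf m)
              {xs. real_of_int (MAX k\<in>{0..m}. S xs k) \<ge> x * real m}
              \<le> exp (- real m * rate_I x)
          \<and> measure_pmf.prob (steps_pmf m)
              {xs. real_of_int (S xs m) \<ge> x * real m}
              \<le> exp (- real m * rate_I x)))
       \<and> (\<exists>\<epsilon>>0. (\<forall>x::real. 0 \<le> x \<and> x < 1 \<longrightarrow> rate_I x \<ge> \<epsilon> * x^2)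
          \<and> (\<forall>m::nat. m > 0 \<longrightarrow> (\<forall>x::real. x \<ge> 0 \<longrightarrow>
              measure_pmf.prob (steps_pmf m)
                {xs. real_of_int (MAX k\<in>{0..m}. S xs k) \<ge> x * real m}
                \<le> exp (- \<epsilon> * real m * x^2)
            \<and> measure_pmf.prob (steps_pmf m)
                {xs. real_of_int (S xs m) \<ge> x * real m}
                \<le> exp (- \<epsilon> * real m * x^2))))"
proof -
  have large_deviation:
    "measure_pmf.prob (steps_pmf m) {xs. real_of_int (MAX k\<in>{0..m}. S xs k) \<ge> x * real m}
       \<le> exp (- real m * rate_I x)" if "0 \<le> x" "x < 1" for m x
    using prob_Max_S_ge_le_exp[OF optimal_base_ge_1[OF that], of m x]
    by (simp add: rate_I_eq_chernoff_exponent[OF that])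
  show ?thesis
    using large_deviation prob_Max_S_ge_le_exp_square rate_I_lower_bound
      order_trans[OF prob_S_ge_le_prob_Max_S_ge]
    by (intro conjI exI[of _ "1 / 16"]) auto
qed

end
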